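(* Let $\varphi_0\in\mathrm{Mon}_+$. There exist a vector field $v\in L^2([0,1],H^1_0([0,1]))$ and a Lagrangian flow $\varphi$ associated with $v$ such that $\varphi(0,x)=\varphi_0(x)$ for all $x\in[0,1]$, and $\varphi(1,x)=1/2$ for $0<x<1$, $\varphi(1,0)=0$, $\varphi(1,1)=1$.
   Context: $\mathrm{Mon}_+$ denotes the set of nondecreasing functions $f:[0,1]\to[0,1]$ with $f(0)=0$ and $f(1)=1$. Definition (Lagrangian flow): let $v\in L^1([0,1],C([0,1]))$. A map $\varphi:[0,1]\times[0,1]\to[0,1]$, $(t,x)\mapsto\varphi(t,x)$, is a Lagrangian flow associated with $v$ if (i) $x\mapsto\varphi(t,x)$ is nondecreasing for every $t$, and (ii) for every $x$ the map $t\mapsto\varphi(t,x)$ is absolutely continuous and $\varphi(t,x)-\varphi(s,x)=\int_s^t v(r,\varphi(r,x))\,dr$ for all $0\le s<t\le 1$. *)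

theory Defs
  imports "HOL-Analysis.Analysis"
begin

definition Mon_plus :: "(real \<Rightarrow> real) set" where
  "Mon_plus = {f. mono_on {0..1} f \<and> f ` {0..1} \<subseteq> {0..1} \<and> f 0 = 0 \<and> f 1 = 1}"

definition abs_continuous_on :: "real \<Rightarrow> real \<Rightarrow> (real \<Rightarrow> real) \<Rightarrow> bool" where
  "abs_continuous_on c d f \<longleftrightarrow>
     (\<forall>e>0. \<exists>\<delta>>0. \<forall>(n::nat) (a::nat \<Rightarrow> real) b.
        (\<forall>i<n. c \<le> a i \<and> a i \<le> b i \<and> b i \<le> d) \<and>
        (\<forall>i<n. \<forall>j<n. i \<noteq> j \<longrightarrow> b i \<le> a j \<or> b j \<le> a i) \<and>
        (\<Sum>i<n. b i - a i) < \<delta>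
        \<longrightarrow> (\<Sum>i<n. \<bar>f (b i) - f (a i)\<bar>) < e)"

text \<open>v (time, space) belongs to L^1([0,1], C([0,1])): each v t is continuous on [0,1],
  v is jointly measurable on [0,1]^2 (so t \<mapsto> v t is strongly measurable into the
  separable space C([0,1])), and t \<mapsto> sup norm of v t is integrable on [0,1].\<close>
definition L1_C :: "(real \<Rightarrow> real \<Rightarrow> real) \<Rightarrow> bool" where
  "L1_C v \<longleftrightarrow>
     (\<forall>t\<in>{0..1}. continuous_on {0..1} (v t)) \<and>
     (\<lambda>(t, x). v t x) \<in> borel_measurable (restrict_space (lborel \<Otimes>\<^sub>M lborel) ({0..1} \<times> {0..1})) \<and>
     set_integrable lborel {0..1} (\<lambda>t. Sup ((\<lambda>x. \<bar>v t x\<bar>) ` {0..1}))"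

text \<open>v belongs to L^2([0,1], H^1_0([0,1])): there is g in L^2([0,1]^2) (the spatial
  derivative) such that for every t, g t is integrable on [0,1], v t x = integral of g t
  from 0 to x on [0,1] (so v t 0 = 0, v t is the continuous representative of an H^1
  function) and v t 1 = 0.  Since H^1_0([0,1]) is a separable Hilbert space with norm
  equivalent to the L^2 norm of the derivative, this is L^2(0,1; H^1_0(0,1)).\<close>
definition L2_H10 :: "(real \<Rightarrow> real \<Rightarrow> real) \<Rightarrow> bool" where
  "L2_H10 v \<longleftrightarrow>
     (\<exists>g :: real \<Rightarrow> real \<Rightarrow> real.
        (\<lambda>(t, y). g t y) \<in> borel_measurable (restrict_space (lborel \<Otimes>\<^sub>M lborel) ({0..1} \<times> {0..1})) \<and>
        integrable (restrict_space (lborel \<Otimes>\<^sub>M lborel) ({0..1} \<times> {0..1})) (\<lambda>(t, y). (g t y)\<^sup>2) \<and>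
        (\<forall>t\<in>{0..1}. set_integrable lborel {0..1} (g t)) \<and>
        (\<forall>t\<in>{0..1}. \<forall>x\<in>{0..1}. v t x = (LBINT y=0..x. g t y)) \<and>
        (\<forall>t\<in>{0..1}. v t 1 = 0))"

definition lagrangian_flow :: "(real \<Rightarrow> real \<Rightarrow> real) \<Rightarrow> (real \<Rightarrow> real \<Rightarrow> real) \<Rightarrow> bool" where
  "lagrangian_flow v \<phi> \<longleftrightarrow>
     L1_C v \<and>
     (\<forall>t\<in>{0..1}. \<forall>x\<in>{0..1}. \<phi> t x \<in> {0..1}) \<and>
     (\<forall>t\<in>{0..1}. mono_on {0..1} (\<phi> t)) \<and>
     (\<forall>x\<in>{0..1}. abs_continuous_on 0 1 (\<lambda>t. \<phi> t x) \<and>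
        set_integrable lborel {0..1} (\<lambda>r. v r (\<phi> r x)) \<and>
        (\<forall>s t. 0 \<le> s \<and> s < t \<and> t \<le> 1 \<longrightarrow>
           \<phi> t x - \<phi> s x = (LBINT r=s..t. v r (\<phi> r x))))"

end

theory Submission
  imports Defs
begin

text \<open>
  The velocity field is autonomous, vanishes at 0, 1/2 and 1, and near each of these zeros
  behaves like |y - y0|^(2/3). Its spatial derivative is of order |y - y0|^(-1/3), which is
  square integrable, so the field lies in L^2(H^1_0). Being only Hoelder continuous at its zeros,
  the field does not determine trajectories uniquely: on [0, 1/2] the curve u \<mapsto> 2 u^3,
  continued by 1/2 - 2 (1 - u)^3, leaves the zero 0 at time 0 and reaches the zero 1/2 exactly
  at time 1, and symmetrically on [1/2, 1]. Every y in [0, 1/2] lies on this curve at some time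
  traj_time y \<ge> 0, so letting each x in (0, 1) follow the curve from the position phi0 x
  (even when phi0 x is 0 or 1) brings it to 1/2 by time 1, while x = 0 and x = 1 stay fixed.
  Trajectories started in this way keep their order, so the flow stays monotone in x.
\<close>

section \<open>Autonomous velocity fields\<close>

lemma abs_continuous_on_lipschitz_on:
  assumes "L-lipschitz_on {c..d} f"
  shows "abs_continuous_on c d f"
  unfolding abs_continuous_on_def
proof (intro allI impI)
  fix e :: real assume e: "0 < e"
  have L: "0 \<le> L" using assms by (rule lipschitz_on_nonneg)
  show "\<exists>\<delta>>0. \<forall>(n::nat) (a::nat \<Rightarrow> real) b.
        (\<forall>i<n. c \<le> a i \<and> a i \<le> b i \<and> b i \<le> d) \<and>
        (\<forall>i<n. \<forall>j<n. i \<noteq> j \<longrightarrow> b i \<le> a j \<or> b j \<le> a i) \<and>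
        (\<Sum>i<n. b i - a i) < \<delta>
        \<longrightarrow> (\<Sum>i<n. \<bar>f (b i) - f (a i)\<bar>) < e"
  proof (intro exI[of _ "e / (L + 1)"] conjI allI impI)
    show "0 < e / (L + 1)" using e L by simp
    fix n :: nat and a b :: "nat \<Rightarrow> real"
    assume H: "(\<forall>i<n. c \<le> a i \<and> a i \<le> b i \<and> b i \<le> d) \<and>
        (\<forall>i<n. \<forall>j<n. i \<noteq> j \<longrightarrow> b i \<le> a j \<or> b j \<le> a i) \<and>
        (\<Sum>i<n. b i - a i) < e / (L + 1)"
    have "\<bar>f (b i) - f (a i)\<bar> \<le> L * (b i - a i)" if "i < n" for i
    proof -
      have "c \<le> a i" "a i \<le> b i" "b i \<le> d" using H that by auto
      then show ?thesis using lipschitz_onD[OF assms, of "b i" "a i"] by (simp add: dist_real_def)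
    qed
    then have "(\<Sum>i<n. \<bar>f (b i) - f (a i)\<bar>) \<le> (\<Sum>i<n. L * (b i - a i))"
      by (intro sum_mono) auto
    also have "\<dots> = L * (\<Sum>i<n. b i - a i)"
      by (simp add: sum_distrib_left)
    also have "\<dots> \<le> (L + 1) * (\<Sum>i<n. b i - a i)"
      using H by (intro mult_right_mono sum_nonneg) auto
    also have "\<dots> < (L + 1) * (e / (L + 1))"
      using H L by (intro mult_strict_left_mono) auto
    also have "\<dots> = e" using L by simp
    finally show "(\<Sum>i<n. \<bar>f (b i) - f (a i)\<bar>) < e" .
  qed
qed

lemma integrable_restrict_space_pair_snd:
  fixes A B :: "real set" and f :: "real \<Rightarrow> real"
  assumes A: "A \<in> sets lborel" "emeasure lborel A < \<infinity>" and B: "B \<in> sets lborel"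
    and f: "f \<in> borel_measurable lborel" "set_integrable lborel B f"
  shows "integrable (restrict_space (lborel \<Otimes>\<^sub>M lborel) (A \<times> B)) (\<lambda>(t, y). f y)"
proof -
  let ?F = "\<lambda>p. indicator (A \<times> B) p *\<^sub>R (case p of (t, y) \<Rightarrow> f y)"
  have fB: "integrable lborel (\<lambda>y. indicator B y * f y)"
    using f(2) by (simp add: set_integrable_def)
  have "integrable (lborel \<Otimes>\<^sub>M lborel) ?F"
  proof (rule lborel_pair.Fubini_integrable)
    show "?F \<in> borel_measurable (lborel \<Otimes>\<^sub>M lborel)" using A B f by measurable
    have "(\<integral>y. norm (?F (t, y)) \<partial>lborel) = indicator A t * (\<integral>y. norm (indicator B y * f y) \<partial>lborel)" for t
      by (cases "t \<in> A") (simp_all add: indicator_times)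
    then show "integrable lborel (\<lambda>t. \<integral>y. norm (?F (t, y)) \<partial>lborel)"
      using A by simp
    show "AE t in lborel. integrable lborel (\<lambda>y. ?F (t, y))"
      using fB by (simp add: indicator_times mult.assoc)
  qed
  then show ?thesis
    using A B by (subst integrable_restrict_space) auto
qed

lemma L2_H10_autonomous:
  fixes g w :: "real \<Rightarrow> real"
  assumes g: "g \<in> borel_measurable lborel"
    and g_int: "set_integrable lborel {0..1} g" "set_integrable lborel {0..1} (\<lambda>y. (g y)\<^sup>2)"
    and w: "\<And>x. x \<in> {0..1} \<Longrightarrow> w x = (LBINT y=0..x. g y)" "w 1 = 0"
  shows "L2_H10 (\<lambda>t. w)"
  unfolding L2_H10_def
proof (intro exI[of _ "\<lambda>t. g"] conjI ballI)
  show "(\<lambda>(t::real, y). g y) \<in> borel_measurable (restrict_space (lborel \<Otimes>\<^sub>M lborel) ({0..1} \<times> {0..1}))"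
    unfolding case_prod_beta' by (intro measurable_restrict_space1 measurable_compose[OF measurable_snd g])
  show "integrable (restrict_space (lborel \<Otimes>\<^sub>M lborel) ({0..1} \<times> {0..1})) (\<lambda>(t::real, y). (g y)\<^sup>2)"
    by (rule integrable_restrict_space_pair_snd) (use g g_int(2) in \<open>auto simp: emeasure_lborel_Icc\<close>)
qed (auto intro: g_int w)

lemma L1_C_autonomous:
  assumes w: "continuous_on {0..1} w"
  shows "L1_C (\<lambda>t. w)"
  unfolding L1_C_def
proof (intro conjI ballI)
  have w_meas: "w \<in> borel_measurable (restrict_space lborel {0..1})"
    using borel_measurable_continuous_on_restrict[OF w]
    by (simp add: measurable_def space_restrict_space sets_restrict_space)
  have snd_meas: "snd \<in> restrict_space (lborel \<Otimes>\<^sub>M lborel) ({0..1} \<times> {0..1}) \<rightarrow>\<^sub>M restrict_space lborel {0..1::real}"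
    by (rule measurable_restrict_space3) auto
  show "(\<lambda>(t, x). w x) \<in> borel_measurable (restrict_space (lborel \<Otimes>\<^sub>M lborel) ({0..1} \<times> {0..1}))"
    unfolding case_prod_beta' by (rule measurable_compose[OF snd_meas w_meas])
  show "set_integrable lborel {0..1} (\<lambda>t::real. Sup ((\<lambda>x. \<bar>w x\<bar>) ` {0..1}))"
    by (rule borel_integrable_atLeastAtMost') (rule continuous_on_const)
qed (use w in simp)

lemma integral_curve_autonomous:
  assumes w: "continuous_on {0..1} w" and T: "T ` {0..1} \<subseteq> {0..1}"
    and ode: "\<And>s t. 0 \<le> s \<Longrightarrow> s \<le> t \<Longrightarrow> t \<le> 1 \<Longrightarrow> ((\<lambda>r. w (T r)) has_integral T t - T s) {s..t}"
  shows "abs_continuous_on 0 1 T" "set_integrable lborel {0..1} (\<lambda>r. w (T r))"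
    "\<And>s t. 0 \<le> s \<Longrightarrow> s < t \<Longrightarrow> t \<le> 1 \<Longrightarrow> T t - T s = (LBINT r=s..t. w (T r))"
proof -
  have "bounded (w ` {0..1})"
    by (rule compact_imp_bounded[OF compact_continuous_image[OF w compact_Icc]])
  then obtain B where B: "\<forall>y\<in>{0..1}. \<bar>w y\<bar> \<le> B"
    by (auto simp: bounded_real)
  have B0: "0 \<le> B" using B by force
  have lip: "B-lipschitz_on {0..1} T"
  proof (rule lipschitz_on_leI)
    fix s t :: real assume "s \<in> {0..1}" "t \<in> {0..1}" "s \<le> t"
    then have "norm (T t - T s) \<le> B * measure lborel (cbox s t)"
      using ode[of s t] B B0 T by (intro has_integral_bound[of B "\<lambda>r. w (T r)"]) (auto simp: image_subset_iff)
    then show "dist (T s) (T t) \<le> B * dist s t"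
      using \<open>s \<le> t\<close> by (simp add: dist_real_def abs_minus_commute)
  qed (rule B0)
  then show "abs_continuous_on 0 1 T"
    by (rule abs_continuous_on_lipschitz_on)
  have wT: "continuous_on {0..1} (\<lambda>r. w (T r))"
    using T by (intro continuous_on_compose2[OF w lipschitz_on_continuous_on[OF lip]]) auto
  then show "set_integrable lborel {0..1} (\<lambda>r. w (T r))"
    by (rule borel_integrable_atLeastAtMost')
  fix s t :: real assume st: "0 \<le> s" "s < t" "t \<le> 1"
  have "set_integrable lborel {s..t} (\<lambda>r. w (T r))"
    using st by (intro borel_integrable_atLeastAtMost' continuous_on_subset[OF wT]) auto
  then have "(LBINT r=s..t. w (T r)) = integral {s..t} (\<lambda>r. w (T r))"
    using st by (simp add: interval_integral_Icc set_borel_integral_eq_integral(2))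
  also have "\<dots> = T t - T s"
    using ode st by (intro integral_unique) auto
  finally show "T t - T s = (LBINT r=s..t. w (T r))" by simp
qed

lemma lagrangian_flow_autonomousI:
  assumes w: "continuous_on {0..1} w"
    and range: "\<And>t x. t \<in> {0..1} \<Longrightarrow> x \<in> {0..1} \<Longrightarrow> \<phi> t x \<in> {0..1}"
    and mono: "\<And>t. t \<in> {0..1} \<Longrightarrow> mono_on {0..1} (\<phi> t)"
    and ode: "\<And>x s t. x \<in> {0..1} \<Longrightarrow> 0 \<le> s \<Longrightarrow> s \<le> t \<Longrightarrow> t \<le> 1 \<Longrightarrow>
      ((\<lambda>r. w (\<phi> r x)) has_integral \<phi> t x - \<phi> s x) {s..t}"
  shows "lagrangian_flow (\<lambda>t. w) \<phi>"
proof -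
  have "abs_continuous_on 0 1 (\<lambda>t. \<phi> t x) \<and> set_integrable lborel {0..1} (\<lambda>r. w (\<phi> r x)) \<and>
      (\<forall>s t. 0 \<le> s \<and> s < t \<and> t \<le> 1 \<longrightarrow> \<phi> t x - \<phi> s x = (LBINT r=s..t. w (\<phi> r x)))"
    if x: "x \<in> {0..1}" for x
    using integral_curve_autonomous[OF w, of "\<lambda>t. \<phi> t x"] range[OF _ x] ode[OF x] by blast
  then show ?thesis
    using L1_C_autonomous[OF w] range mono by (auto simp: lagrangian_flow_def)
qed

definition quarters ::
    "(real \<Rightarrow> real) \<Rightarrow> (real \<Rightarrow> real) \<Rightarrow> (real \<Rightarrow> real) \<Rightarrow> (real \<Rightarrow> real) \<Rightarrow> real \<Rightarrow> real" where
  "quarters A B C D y =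
     (if y \<le> 1/4 then A y else if y \<le> 1/2 then B y else if y \<le> 3/4 then C y else D y)"

lemma continuous_on_quarters:
  assumes "continuous_on UNIV A" "continuous_on UNIV B" "continuous_on UNIV C" "continuous_on UNIV D"
    and "A (1/4) = B (1/4)" "B (1/2) = C (1/2)" "C (3/4) = D (3/4)"
  shows "continuous_on UNIV (quarters A B C D)"
  unfolding quarters_def[abs_def]
  using assms by (intro continuous_on_cases_le continuous_on_id) (blast intro: continuous_on_subset | (hypsubst, simp))+

lemma quarters_has_integral:
  assumes cont: "continuous_on UNIV (quarters A B C D)"
    and A: "\<And>y. 0 < y \<Longrightarrow> y < 1/4 \<Longrightarrow> (A has_real_derivative a y) (at y)"
    and B: "\<And>y. 1/4 < y \<Longrightarrow> y < 1/2 \<Longrightarrow> (B has_real_derivative b y) (at y)"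
    and C: "\<And>y. 1/2 < y \<Longrightarrow> y < 3/4 \<Longrightarrow> (C has_real_derivative c y) (at y)"
    and D: "\<And>y. 3/4 < y \<Longrightarrow> y < 1 \<Longrightarrow> (D has_real_derivative d y) (at y)"
    and x: "0 \<le> x" "x \<le> 1"
  shows "(quarters a b c d has_integral quarters A B C D x - quarters A B C D 0) {0..x}"
proof (rule fundamental_theorem_of_calculus_interior_strong[of "{1/4, 1/2, 3/4}"])
  show "continuous_on {0..x} (quarters A B C D)"
    using cont by (rule continuous_on_subset) auto
  fix y assume y: "y \<in> {0<..<x} - {1/4, 1/2, 3/4}"
  have piece: "(quarters A B C D has_real_derivative quarters a b c d y) (at y)"
    if "(F has_real_derivative quarters a b c d y) (at y)" "open S" "y \<in> S"
      "\<And>z. z \<in> S \<Longrightarrow> F z = quarters A B C D z" for F S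
    using has_field_derivative_transform_within_open[OF that] .
  consider "y < 1/4" | "1/4 < y" "y < 1/2" | "1/2 < y" "y < 3/4" | "3/4 < y"
    using y by force
  then have "(quarters A B C D has_real_derivative quarters a b c d y) (at y)"
  proof cases
    case 1
    with y show ?thesis by (intro piece[of A "{..<1/4}"]) (auto simp: quarters_def intro!: A)
  next
    case 2
    then show ?thesis by (intro piece[of B "{1/4<..<1/2}"]) (auto simp: quarters_def intro!: B)
  next
    case 3
    then show ?thesis by (intro piece[of C "{1/2<..<3/4}"]) (auto simp: quarters_def intro!: C)
  next
    case 4
    with y x show ?thesis by (intro piece[of D "{3/4<..}"]) (auto simp: quarters_def intro!: D)
  qed
  then show "(quarters A B C D has_vector_derivative quarters a b c d y) (at y)"
    by (simp add: has_real_derivative_iff_has_vector_derivative)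
qed (use x in auto)

lemma quarters_reflected_integrable_on:
  assumes k: "continuous_on UNIV k"
    and k': "\<And>u. 0 < u \<Longrightarrow> u < 1/4 \<Longrightarrow> (k has_real_derivative k' u) (at u)"
  shows "quarters k' (\<lambda>y. k' (1/2 - y)) (\<lambda>y. k' (y - 1/2)) (\<lambda>y. k' (1 - y)) integrable_on {0..1}"
proof -
  \<comment> \<open>The constants glue the reflected antiderivatives continuously at 1/4, 1/2 and 3/4.\<close>
  define K where "K = quarters k (\<lambda>y. 2 * k (1/4) - k (1/2 - y))
    (\<lambda>y. 2 * k (1/4) - 2 * k 0 + k (y - 1/2)) (\<lambda>y. 4 * k (1/4) - 2 * k 0 - k (1 - y))"
  have "(quarters k' (\<lambda>y. k' (1/2 - y)) (\<lambda>y. k' (y - 1/2)) (\<lambda>y. k' (1 - y)) has_integral K 1 - K 0) {0..1}"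
    unfolding K_def
  proof (rule quarters_has_integral)
    show "continuous_on UNIV (quarters k (\<lambda>y. 2 * k (1/4) - k (1/2 - y))
      (\<lambda>y. 2 * k (1/4) - 2 * k 0 + k (y - 1/2)) (\<lambda>y. 4 * k (1/4) - 2 * k 0 - k (1 - y)))"
      by (intro continuous_on_quarters continuous_intros continuous_on_compose2[OF k]) auto
  qed (auto intro!: derivative_eq_intros DERIV_chain2[OF k'] k')
  then show ?thesis by blast
qed

section \<open>The velocity field\<close>

text \<open>The constant 6 makes cusp (2 a^3) = 6 a^2, so that u \<mapsto> 2 u^3 is an integral curve.\<close>

definition cusp :: "real \<Rightarrow> real" where
  "cusp u = 6 * root 3 (u/2) ^ 2"

definition cusp' :: "real \<Rightarrow> real" where
  "cusp' u = 2 / root 3 (u/2)"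

lemma has_real_derivative_root3_half:
  assumes "0 < u"
  shows "((\<lambda>u. root 3 (u/2)) has_real_derivative 1 / (6 * root 3 (u/2) ^ 2)) (at u)"
proof -
  have "((\<lambda>u. root 3 (u/2)) has_real_derivative inverse (real 3 * root 3 (u/2) ^ (3 - Suc 0)) * (1/2)) (at u)"
    using assms by (intro DERIV_chain2[OF DERIV_real_root]) (auto intro!: derivative_eq_intros)
  then show ?thesis by (simp add: field_simps)
qed

lemma cusp_has_real_derivative: "0 < u \<Longrightarrow> (cusp has_real_derivative cusp' u) (at u)"
  unfolding cusp_def[abs_def] cusp'_def
  by (auto intro!: derivative_eq_intros has_real_derivative_root3_half simp: field_simps power2_eq_square)

lemma cusp'_sq_has_antiderivative:
  "0 < u \<Longrightarrow> ((\<lambda>u. 24 * root 3 (u/2)) has_real_derivative (cusp' u)\<^sup>2) (at u)"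
  unfolding cusp'_def
  by (auto intro!: derivative_eq_intros has_real_derivative_root3_half simp: field_simps power2_eq_square)

lemma continuous_on_cusp: "continuous_on UNIV cusp"
  unfolding cusp_def by (intro continuous_intros) auto

definition velocity :: "real \<Rightarrow> real" where
  "velocity = quarters cusp (\<lambda>y. cusp (1/2 - y)) (\<lambda>y. - cusp (y - 1/2)) (\<lambda>y. - cusp (1 - y))"

definition velocity_dx :: "real \<Rightarrow> real" where
  "velocity_dx = quarters cusp' (\<lambda>y. - cusp' (1/2 - y)) (\<lambda>y. - cusp' (y - 1/2)) (\<lambda>y. cusp' (1 - y))"

lemma continuous_on_velocity: "continuous_on UNIV velocity"
  unfolding velocity_def
  by (intro continuous_on_quarters continuous_intros continuous_on_compose2[OF continuous_on_cusp])
     (auto simp: cusp_def)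

lemma velocity_0 [simp]: "velocity 0 = 0"
  and velocity_half [simp]: "velocity (1/2) = 0"
  and velocity_1 [simp]: "velocity 1 = 0"
  by (simp_all add: velocity_def quarters_def cusp_def)

lemma velocity_dx_has_integral:
  assumes "0 \<le> x" "x \<le> 1"
  shows "(velocity_dx has_integral velocity x) {0..x}"
proof -
  have "(velocity_dx has_integral velocity x - velocity 0) {0..x}"
    unfolding velocity_def velocity_dx_def
    by (rule quarters_has_integral[OF continuous_on_velocity[unfolded velocity_def]])
       (use assms in \<open>auto intro!: derivative_eq_intros DERIV_chain2[OF cusp_has_real_derivative] cusp_has_real_derivative
         DERIV_cong[OF DERIV_chain2[OF cusp_has_real_derivative]]\<close>)
  then show ?thesis by simp
qed

lemma set_integrable_lborel_if_absolutely_integrable: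
  fixes f :: "'a::euclidean_space \<Rightarrow> real"
  assumes "f \<in> borel_measurable borel" and "f absolutely_integrable_on S" and "S \<in> sets borel"
  shows "set_integrable lborel S f"
  using assms unfolding set_integrable_def by (subst (asm) integrable_completion) auto

lemma velocity_dx_measurable: "velocity_dx \<in> borel_measurable borel"
  unfolding velocity_dx_def quarters_def[abs_def] cusp'_def by measurable

lemma set_integrable_velocity_dx: "set_integrable lborel {0..1} velocity_dx"
proof (rule set_integrable_lborel_if_absolutely_integrable[OF velocity_dx_measurable])
  have "quarters cusp' (\<lambda>y. cusp' (1/2 - y)) (\<lambda>y. cusp' (y - 1/2)) (\<lambda>y. cusp' (1 - y)) integrable_on {0..1}"
    by (rule quarters_reflected_integrable_on[OF continuous_on_cusp cusp_has_real_derivative]) simp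
  then have "(\<lambda>y. \<bar>velocity_dx y\<bar>) integrable_on {0..1}"
    by (rule integrable_eq) (auto simp: velocity_dx_def quarters_def cusp'_def)
  then show "velocity_dx absolutely_integrable_on {0..1}"
    using velocity_dx_has_integral[of 1] by (auto intro: absolutely_integrable_onI)
qed auto

lemma set_integrable_velocity_dx_sq: "set_integrable lborel {0..1} (\<lambda>y. (velocity_dx y)\<^sup>2)"
proof (rule set_integrable_lborel_if_absolutely_integrable)
  have "quarters (\<lambda>u. (cusp' u)\<^sup>2) (\<lambda>y. (cusp' (1/2 - y))\<^sup>2) (\<lambda>y. (cusp' (y - 1/2))\<^sup>2)
      (\<lambda>y. (cusp' (1 - y))\<^sup>2) integrable_on {0..1}"
    by (rule quarters_reflected_integrable_on[OF _ cusp'_sq_has_antiderivative])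
       (intro continuous_intros, auto)
  then have "(\<lambda>y. (velocity_dx y)\<^sup>2) integrable_on {0..1}"
    by (rule integrable_eq) (auto simp: velocity_dx_def quarters_def)
  then show "(\<lambda>y. (velocity_dx y)\<^sup>2) absolutely_integrable_on {0..1}"
    by (simp add: absolutely_integrable_on_iff_nonneg)
qed (use velocity_dx_measurable in auto)

lemma L2_H10_velocity: "L2_H10 (\<lambda>t. velocity)"
proof (rule L2_H10_autonomous[OF _ set_integrable_velocity_dx set_integrable_velocity_dx_sq])
  show "velocity_dx \<in> borel_measurable lborel"
    using velocity_dx_measurable by simp
  fix x :: real assume x: "x \<in> {0..1}"
  then have "(LBINT y=0..x. velocity_dx y) = integral {0..x} velocity_dx"
    using set_integrable_subset[OF set_integrable_velocity_dx, of "{0..x}"]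
    by (simp add: interval_integral_Icc zero_ereal_def set_borel_integral_eq_integral(2))
  then show "velocity x = (LBINT y=0..x. velocity_dx y)"
    using x velocity_dx_has_integral[of x] by (simp add: integral_unique)
qed simp

section \<open>The integral curve leaving 0\<close>

definition traj :: "real \<Rightarrow> real" where
  "traj u = (if u \<le> 1/2 then 2 * u^3 else if u \<le> 1 then 1/2 - 2 * (1 - u)^3 else 1/2)"

definition traj' :: "real \<Rightarrow> real" where
  "traj' u = (if u \<le> 1/2 then 6 * u^2 else if u \<le> 1 then 6 * (1 - u)^2 else 0)"

definition traj_time :: "real \<Rightarrow> real" where
  "traj_time y = (if y \<le> 1/4 then root 3 (y/2) else 1 - root 3 ((1/2 - y)/2))"

lemma continuous_on_traj: "continuous_on UNIV traj"
  unfolding traj_def[abs_def]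
  by (intro continuous_on_cases_le continuous_intros) (hypsubst, simp add: power3_eq_cube)+

lemma traj_eq_half: "1 \<le> u \<Longrightarrow> traj u = 1/2"
  by (auto simp: traj_def)

lemma cube_le_eighth: "0 \<le> a \<Longrightarrow> a \<le> 1/2 \<Longrightarrow> a^3 \<le> (1/8 :: real)"
  using power_mono[of a "1/2" 3] by (simp add: power_divide)

lemma cube_less_eighth: "0 \<le> a \<Longrightarrow> a < 1/2 \<Longrightarrow> a^3 < (1/8 :: real)"
  using power_strict_mono[of a "1/2" 3] by (simp add: power_divide)

lemma traj_mono:
  assumes "0 \<le> u" "u \<le> v"
  shows "traj u \<le> traj v"
proof -
  consider "v \<le> 1/2" | "u \<le> 1/2" "1/2 < v" | "1/2 < u"
    by linarith
  then show ?thesis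
  proof cases
    case 1
    then show ?thesis using assms power_mono[of u v 3] by (auto simp: traj_def)
  next
    case 2
    have "traj u \<le> 1/4"
      using 2 assms cube_le_eighth[of u] by (simp add: traj_def)
    moreover have "1/4 \<le> traj v"
    proof (cases "v \<le> 1")
      case True
      then show ?thesis using 2 cube_le_eighth[of "1 - v"] by (simp add: traj_def)
    qed (simp add: traj_def)
    ultimately show ?thesis by linarith
  next
    case 3
    then show ?thesis using assms power_mono[of "1 - v" "1 - u" 3] by (auto simp: traj_def)
  qed
qed

lemma traj_bounds:
  assumes "0 \<le> u"
  shows "0 \<le> traj u" "traj u \<le> 1/2"
proof -
  show "0 \<le> traj u"
    using traj_mono[OF order_refl assms] by (simp add: traj_def)
  show "traj u \<le> 1/2"
    using traj_mono[OF assms, of "max u 1"] traj_eq_half[of "max u 1"] by simp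
qed

lemma traj_has_real_derivative:
  assumes "u \<notin> {1/2, 1}"
  shows "(traj has_real_derivative traj' u) (at u)"
proof -
  have piece: "(traj has_real_derivative traj' u) (at u)"
    if "(F has_real_derivative traj' u) (at u)" "open S" "u \<in> S"
      "\<And>v. v \<in> S \<Longrightarrow> F v = traj v" for F S
    using has_field_derivative_transform_within_open[OF that] .
  consider "u < 1/2" | "1/2 < u" "u < 1" | "1 < u"
    using assms by force
  then show ?thesis
  proof cases
    case 1
    then show ?thesis
      by (intro piece[of "\<lambda>u. 2 * u^3" "{..<1/2}"] derivative_eq_intros)
         (auto simp: traj_def traj'_def)
  next
    case 2
    then show ?thesis
      by (intro piece[of "\<lambda>u. 1/2 - 2 * (1 - u)^3" "{1/2<..<1}"] derivative_eq_intros)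
         (auto simp: traj_def traj'_def)
  next
    case 3
    then show ?thesis
      by (intro piece[of "\<lambda>u. 1/2" "{1<..}"] derivative_eq_intros) (auto simp: traj_def traj'_def)
  qed
qed

lemma root3_half_bounds:
  assumes "0 \<le> a" "a \<le> 1/4"
  shows "0 \<le> root 3 (a/2)" "root 3 (a/2) \<le> 1/2" "a < 1/4 \<Longrightarrow> root 3 (a/2) < 1/2"
proof -
  have eighth: "root 3 (1/8) = 1/2"
    by (rule real_root_pos_unique) (auto simp: power3_eq_cube)
  show "0 \<le> root 3 (a/2)" using assms by simp
  show "root 3 (a/2) \<le> 1/2"
    using assms real_root_le_iff[of 3 "a/2" "1/8"] by (simp add: eighth)
  show "root 3 (a/2) < 1/2" if "a < 1/4"
    using that real_root_less_iff[of 3 "a/2" "1/8"] by (simp add: eighth)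
qed

lemma traj_time_nonneg: "0 \<le> y \<Longrightarrow> y \<le> 1/2 \<Longrightarrow> 0 \<le> traj_time y"
  using root3_half_bounds[of y] root3_half_bounds[of "1/2 - y"] by (auto simp: traj_time_def)

lemma traj_traj_time:
  assumes "0 \<le> y" "y \<le> 1/2"
  shows "traj (traj_time y) = y"
proof (cases "y \<le> 1/4")
  case True
  then show ?thesis
    using assms root3_half_bounds[of y] by (simp add: traj_time_def traj_def)
next
  case False
  then have "(root 3 ((1/2 - y)/2))^3 = (1/2 - y)/2"
    using assms by simp
  then show ?thesis
    using False assms root3_half_bounds[of "1/2 - y"] by (simp add: traj_time_def traj_def field_simps)
qed

lemma traj_time_mono:
  assumes "0 \<le> y" "y \<le> z" "z \<le> 1/2"
  shows "traj_time y \<le> traj_time z"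
proof -
  consider "z \<le> 1/4" | "y \<le> 1/4" "1/4 < z" | "1/4 < y"
    by linarith
  then show ?thesis
  proof cases
    case 1
    then show ?thesis using assms by (simp add: traj_time_def)
  next
    case 2
    then show ?thesis
      using assms root3_half_bounds(2)[of y] root3_half_bounds(2)[of "1/2 - z"]
      by (simp add: traj_time_def)
  next
    case 3
    then show ?thesis using assms by (simp add: traj_time_def)
  qed
qed

lemma cusp_double_cube: "0 \<le> a \<Longrightarrow> cusp (2 * a^3) = 6 * a^2"
  by (simp add: cusp_def odd_real_root_power_cancel)

lemma velocity_traj:
  assumes "0 \<le> u"
  shows "velocity (traj u) = traj' u"
proof -
  consider "u \<le> 1/2" | "1/2 < u" "u \<le> 1" | "1 < u" by force
  then show ?thesis
  proof cases
    case 1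
    then show ?thesis
      using assms cube_le_eighth[of u] by (simp add: velocity_def quarters_def traj_def traj'_def cusp_double_cube)
  next
    case 2
    then show ?thesis
      using cube_less_eighth[of "1 - u"] by (simp add: velocity_def quarters_def traj_def traj'_def cusp_double_cube)
  next
    case 3
    then show ?thesis by (simp add: traj_def traj'_def)
  qed
qed

lemma velocity_reflect:
  assumes "0 \<le> y" "y \<le> 1/2"
  shows "velocity (1 - y) = - velocity y"
proof -
  consider "y < 1/4" | "y = 1/4" | "1/4 < y" "y < 1/2" | "y = 1/2"
    using assms by force
  then show ?thesis
  proof cases
    case 2
    show ?thesis unfolding 2 by (simp add: velocity_def quarters_def)
  next
    case 4
    show ?thesis unfolding 4 by simp
  qed (simp_all add: velocity_def quarters_def)
qed

lemma traj_has_integral: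
  assumes "0 \<le> c" "0 \<le> s" "s \<le> t"
  shows "((\<lambda>r. velocity (traj (r + c))) has_integral traj (t + c) - traj (s + c)) {s..t}"
proof (rule fundamental_theorem_of_calculus_interior_strong[of "{1/2 - c, 1 - c}"])
  show "continuous_on {s..t} (\<lambda>r. traj (r + c))"
    by (intro continuous_on_compose2[OF continuous_on_traj] continuous_intros) auto
  fix r assume r: "r \<in> {s<..<t} - {1/2 - c, 1 - c}"
  then have "r + c \<notin> {1/2, 1}" by auto
  from DERIV_chain2[OF traj_has_real_derivative[OF this] DERIV_add[OF DERIV_ident DERIV_const]]
  have "((\<lambda>r. traj (r + c)) has_real_derivative traj' (r + c)) (at r)" by simp
  then show "((\<lambda>r. traj (r + c)) has_vector_derivative velocity (traj (r + c))) (at r)"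
    using r assms by (simp add: velocity_traj has_real_derivative_iff_has_vector_derivative)
qed (use assms in auto)

section \<open>The flow\<close>

definition orbit :: "real \<Rightarrow> real \<Rightarrow> real" where
  "orbit y t = (if y \<le> 1/2 then traj (t + traj_time y) else 1 - traj (t + traj_time (1 - y)))"

lemma orbit_0: "y \<in> {0..1} \<Longrightarrow> orbit y 0 = y"
  by (simp add: orbit_def traj_traj_time)

lemma orbit_bounds: "y \<in> {0..1} \<Longrightarrow> 0 \<le> t \<Longrightarrow> orbit y t \<in> {0..1}"
  using traj_bounds[of "t + traj_time y"] traj_bounds[of "t + traj_time (1 - y)"]
    traj_time_nonneg[of y] traj_time_nonneg[of "1 - y"]
  by (auto simp: orbit_def)

lemma orbit_eq_half: "y \<in> {0..1} \<Longrightarrow> 1 \<le> t \<Longrightarrow> orbit y t = 1/2"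
  using traj_time_nonneg[of y] traj_time_nonneg[of "1 - y"] by (auto simp: orbit_def traj_eq_half)

lemma orbit_mono:
  assumes "y \<in> {0..1}" "z \<in> {0..1}" "y \<le> z" "0 \<le> t"
  shows "orbit y t \<le> orbit z t"
proof -
  consider "z \<le> 1/2" | "y \<le> 1/2" "1/2 < z" | "1/2 < y"
    by linarith
  then show ?thesis
  proof cases
    case 1
    then show ?thesis
      using assms traj_time_nonneg[of y] traj_time_mono[of y z]
      by (auto simp: orbit_def intro!: traj_mono)
  next
    case 2
    then show ?thesis
      using assms traj_bounds[of "t + traj_time y"] traj_bounds[of "t + traj_time (1 - z)"]
        traj_time_nonneg[of y] traj_time_nonneg[of "1 - z"]
      by (auto simp: orbit_def)
  next
    case 3
    then show ?thesis
      using assms traj_time_nonneg[of "1 - z"] traj_time_mono[of "1 - z" "1 - y"]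
      by (auto simp: orbit_def intro!: traj_mono)
  qed
qed

lemma orbit_has_integral:
  assumes y: "y \<in> {0..1}" and st: "0 \<le> s" "s \<le> t"
  shows "((\<lambda>r. velocity (orbit y r)) has_integral orbit y t - orbit y s) {s..t}"
proof (cases "y \<le> 1/2")
  case True
  have "0 \<le> traj_time y"
    using True y by (intro traj_time_nonneg) auto
  from traj_has_integral[OF this st] show ?thesis
    using True by (simp add: orbit_def)
next
  case False
  define c where "c = traj_time (1 - y)"
  have c: "0 \<le> c"
    using False y unfolding c_def by (intro traj_time_nonneg) auto
  have "((\<lambda>r. - velocity (traj (r + c))) has_integral - (traj (t + c) - traj (s + c))) {s..t}"
    by (intro has_integral_neg traj_has_integral[OF c st])
  moreover have "- velocity (traj (r + c)) = velocity (1 - traj (r + c))" if "r \<in> {s..t}" for r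
    using that st c traj_bounds[of "r + c"] by (simp add: velocity_reflect)
  ultimately have "((\<lambda>r. velocity (1 - traj (r + c))) has_integral - (traj (t + c) - traj (s + c))) {s..t}"
    by (rule has_integral_eq[rotated])
  then show ?thesis
    using False by (simp add: orbit_def c_def)
qed

lemma Mon_plus_unit_interval: "f \<in> Mon_plus \<Longrightarrow> (x::real) \<in> {0..1} \<Longrightarrow> f x \<in> {0..1}"
  by (auto simp: Mon_plus_def image_subset_iff)

definition flow :: "(real \<Rightarrow> real) \<Rightarrow> real \<Rightarrow> real \<Rightarrow> real" where
  "flow f t x = (if 0 < x \<and> x < 1 then orbit (f x) t else x)"

lemma lagrangian_flow_flow:
  assumes f: "f \<in> Mon_plus"
  shows "lagrangian_flow (\<lambda>t. velocity) (flow f)"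
proof (rule lagrangian_flow_autonomousI)
  note f01 = Mon_plus_unit_interval[OF f]
  show "continuous_on {0..1} velocity"
    using continuous_on_velocity by (rule continuous_on_subset) auto
  show "flow f t x \<in> {0..1}" if "t \<in> {0..1}" "x \<in> {0..1}" for t x
    using that f01 orbit_bounds by (auto simp: flow_def)
  show "mono_on {0..1} (flow f t)" if t: "t \<in> {0..1}" for t
  proof (rule mono_onI)
    fix x z :: real assume xz: "x \<in> {0..1}" "z \<in> {0..1}" "x \<le> z"
    have "f x \<le> f z" using f xz by (auto simp: Mon_plus_def intro: mono_onD)
    then show "flow f t x \<le> flow f t z"
      using xz t f01[of x] f01[of z] orbit_bounds[of "f x" t] orbit_bounds[of "f z" t] orbit_mono[of "f x" "f z" t]
      by (auto simp: flow_def)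
  qed
  show "((\<lambda>r. velocity (flow f r x)) has_integral flow f t x - flow f s x) {s..t}"
    if "x \<in> {0..1}" "0 \<le> s" "s \<le> t" "t \<le> 1" for x s t
    using that f01[of x] orbit_has_integral[of "f x" s t] by (auto simp: flow_def)
qed

lemma flow_initial:
  assumes "f \<in> Mon_plus" "x \<in> {0..1}"
  shows "flow f 0 x = f x"
proof -
  have "f 0 = 0" "f 1 = 1"
    using assms(1) by (auto simp: Mon_plus_def)
  then show ?thesis
    using assms Mon_plus_unit_interval[of f x] by (auto simp: flow_def orbit_0)
qed

lemma flow_final: "f \<in> Mon_plus \<Longrightarrow> 0 < x \<Longrightarrow> x < 1 \<Longrightarrow> flow f 1 x = 1/2"
  using Mon_plus_unit_interval[of f x] by (simp add: flow_def orbit_eq_half)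

theorem mainTheorem4:
  fixes \<phi>\<^sub>0 :: "real \<Rightarrow> real"
  assumes "\<phi>\<^sub>0 \<in> Mon_plus"
  shows "\<exists>v \<phi>. L2_H10 v \<and> lagrangian_flow v \<phi> \<and>
           (\<forall>x\<in>{0..1}. \<phi> 0 x = \<phi>\<^sub>0 x) \<and>
           (\<forall>x. 0 < x \<and> x < 1 \<longrightarrow> \<phi> 1 x = 1/2) \<and>
           \<phi> 1 0 = 0 \<and> \<phi> 1 1 = 1"
  using L2_H10_velocity lagrangian_flow_flow[OF assms] flow_initial[OF assms] flow_final[OF assms]
  by (intro exI[of _ "\<lambda>t. velocity"] exI[of _ "flow \<phi>\<^sub>0"]) (auto simp: flow_def)

end
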